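(* Let $t,s$ be two trees of $\mathcal{A}$ different from $|$, with $k$ and $l$ as below. Then $$t\prec s=\sum_{\substack{\sigma\in\mathrm{QSh}(k,l)\\ \sigma^{-1}(1)=\{1\}}}\sigma(t,s),\qquad t\cdot s=\sum_{\substack{\sigma\in\mathrm{QSh}(k,l)\\ \sigma^{-1}(1)=\{1,k+1\}}}\sigma(t,s),\qquad t\succ s=\sum_{\substack{\sigma\in\mathrm{QSh}(k,l)\\ \sigma^{-1}(1)=\{k+1\}}}\sigma(t,s).$$
   Context: Trees: planar rooted trees in which every internal vertex has at least two children; the root vertex hangs from a trunk edge; leaves are edges without upper vertex; $|$ is the one-leaf tree. $\mathcal A$ is the $\mathbb K$-vector space with basis these trees, with products defined recursively: $x_0\vee\cdots\vee x_k$ ($k\ge1$) grafts trees left to right on a new root vertex; for $x=x^{(0)}\vee\cdots\vee x^{(k)}$, $y=y^{(0)}\vee\cdots\vee y^{(l)}$: $x\prec y=x^{(0)}\vee\cdots\vee x^{(k-1)}\vee(x^{(k)}*y)$, $x\cdot y=x^{(0)}\vee\cdots\vee x^{(k-1)}\vee(x^{(k)}*y^{(0)})\vee y^{(1)}\vee\cdots\vee y^{(l)}$, $x\succ y=(x*y^{(0)})\vee y^{(1)}\vee\cdots\vee y^{(l)}$, with $*=\prec+\cdot+\succ$ and $|*z=z*|=z$. A $(k,l)$-quasi-shuffle is a surjection $\sigma:\{1,\dots,k+l\}\to\{1,\dots,n\}$ with $\sigma(1)<\cdots<\sigma(k)$ and $\sigma(k+1)<\cdots<\sigma(k+l)$;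 $\mathrm{QSh}(k,l)$ is their set. Let $v_1,\dots,v_k$ be the internal vertices (from the root up) on the right-most branch of $t$ (path from the root always to the right-most child), and $F_i$ the forest of subtrees at the children of $v_i$ other than the right-most one; let $w_1,\dots,w_l$ be the internal vertices on the left-most branch of $s$ and $F_{k+j}$ the forest of subtrees at the children of $w_j$ other than the left-most one. $\sigma(t,s)$ is the tree with a ladder of internal vertices $u_1$ (root),$\dots,u_n$ ($u_{p+1}$ child of $u_p$, ladder child of $u_n$ a leaf), the children of $u_p$ being from left to right: the trees of $F_i$ if $\sigma(i)=p$ ($i\le k$), the ladder child, the trees of $F_{k+j}$ if $\sigma(k+j)=p$. *)

theory Defs
  imports Main "HOL-Library.Multiset" "HOL-Library.FuncSet"
begin

text \<open>Leaf is the one-leaf tree (written as a bar in the paper);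
  Node cs is the tree whose root vertex carries the subtrees cs from left to right,
  i.e. the grafting of the trees cs on a new root vertex.\<close>
datatype tree = Leaf | Node "tree list"

fun wf_tree :: "tree \<Rightarrow> bool" where
  "wf_tree Leaf = True"
| "wf_tree (Node cs) = (2 \<le> length cs \<and> list_all wf_tree cs)"

lemma size_mem_less: "c \<in> set cs \<Longrightarrow> size c < size (Node cs)"
  by (induction cs) auto

lemma size_last_less: "cs \<noteq> [] \<Longrightarrow> size (last cs) < size (Node cs)"
  by (rule size_mem_less) simp

lemma size_hd_less: "cs \<noteq> [] \<Longrightarrow> size (hd cs) < size (Node cs)"
  by (rule size_mem_less) simp

text \<open>Elements of the span of trees with nonnegative integer coefficients are
  represented as multisets of trees (all structure constants are in N).\<close>

fun combos :: "tree multiset list \<Rightarrow> tree list multiset" where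
  "combos [] = {#[]#}"
| "combos (M # Ms) = sum_mset (image_mset (\<lambda>x. image_mset ((#) x) (combos Ms)) M)"

text \<open>Multilinear extension of grafting on a new root vertex.\<close>
definition graft :: "tree multiset list \<Rightarrow> tree multiset" where
  "graft Ms = image_mset Node (combos Ms)"

datatype opk = Prec | Dot | Succ | Star

function prod :: "opk \<Rightarrow> tree \<Rightarrow> tree \<Rightarrow> tree multiset" where
  "prod Star x y =
     (if x = Leaf then {#y#} else if y = Leaf then {#x#}
      else prod Prec x y + prod Dot x y + prod Succ x y)"
| "prod Prec Leaf y = {#}"
| "prod Prec (Node xs) y =
     (if xs = [] then {#} else
      graft (map (\<lambda>a. {#a#}) (butlast xs) @ [prod Star (last xs) y]))"
| "prod Dot Leaf y = {#}"
| "prod Dot (Node xs) Leaf = {#}"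
| "prod Dot (Node xs) (Node ys) =
     (if xs = [] \<or> ys = [] then {#} else
      graft (map (\<lambda>a. {#a#}) (butlast xs) @ [prod Star (last xs) (hd ys)]
             @ map (\<lambda>a. {#a#}) (tl ys)))"
| "prod Succ x Leaf = {#}"
| "prod Succ x (Node ys) =
     (if ys = [] then {#} else
      graft (prod Star x (hd ys) # map (\<lambda>a. {#a#}) (tl ys)))"
  by pat_completeness auto
termination
  by (relation "measure (\<lambda>(op, x, y). 2 * (size x + size y) + (if op = Star then 1 else 0))")
     (auto, (fastforce dest: size_last_less size_hd_less)+)

definition prec :: "tree \<Rightarrow> tree \<Rightarrow> tree multiset" where "prec = prod Prec"
definition dotp :: "tree \<Rightarrow> tree \<Rightarrow> tree multiset" where "dotp = prod Dot"
definition succ :: "tree \<Rightarrow> tree \<Rightarrow> tree multiset" where "succ = prod Succ"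

text \<open>rbranch t lists, from the root up, the forests F_i of non-right-most children
  of the internal vertices on the right-most branch of t.\<close>
function rbranch :: "tree \<Rightarrow> tree list list" where
  "rbranch Leaf = []"
| "rbranch (Node cs) = (if cs = [] then [[]] else butlast cs # rbranch (last cs))"
  by pat_completeness auto
termination
  by (relation "measure size") (auto dest: size_last_less)

text \<open>lbranch s lists, from the root up, the forests of non-left-most children
  of the internal vertices on the left-most branch of s.\<close>
function lbranch :: "tree \<Rightarrow> tree list list" where
  "lbranch Leaf = []"
| "lbranch (Node cs) = (if cs = [] then [[]] else tl cs # lbranch (hd cs))"
  by pat_completeness auto
termination
  by (relation "measure size") (auto dest: size_hd_less)

definition QSh :: "nat \<Rightarrow> nat \<Rightarrow> (nat \<Rightarrow> nat) set" where
  "QSh k l = {\<sigma>. \<sigma> \<in> extensional {1..k+l}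
                 \<and> (\<exists>n. \<sigma> ` {1..k+l} = {1..n})
                 \<and> strict_mono_on {1..k} \<sigma>
                 \<and> strict_mono_on {k+1..k+l} \<sigma>}"

text \<open>ladder F \<sigma> k l m p builds the part of the ladder from vertex u_p upwards,
  with m internal vertices u_p, ..., u_(p+m-1); F is the list F_1, ..., F_(k+l)
  (0-indexed).\<close>
primrec ladder :: "tree list list \<Rightarrow> (nat \<Rightarrow> nat) \<Rightarrow> nat \<Rightarrow> nat \<Rightarrow> nat \<Rightarrow> nat \<Rightarrow> tree" where
  "ladder F \<sigma> k l 0 p = Leaf"
| "ladder F \<sigma> k l (Suc m) p =
     Node (concat (map (\<lambda>i. F ! (i - 1)) (filter (\<lambda>i. \<sigma> i = p) [1..<k+1]))
           @ [ladder F \<sigma> k l m (Suc p)]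
           @ concat (map (\<lambda>i. F ! (i - 1)) (filter (\<lambda>i. \<sigma> i = p) [k+1..<k+l+1])))"

definition sigma_tree :: "(nat \<Rightarrow> nat) \<Rightarrow> tree \<Rightarrow> tree \<Rightarrow> tree" where
  "sigma_tree \<sigma> t s =
     (let k = length (rbranch t); l = length (lbranch s); n = card (\<sigma> ` {1..k+l})
      in ladder (rbranch t @ lbranch s) \<sigma> k l n 1)"

end

theory Submission
  imports Defs
begin

(*
  A quasi-shuffle sigma is increasing on both blocks, so sigma^-1(1) is one of {1}, {k+1}
  and {1, k+1}. Deleting sigma^-1(1) and lowering all other values by one is a bijection from
  the quasi-shuffles with a given sigma^-1(1) onto the quasi-shuffles of the two trees left
  after removing the root vertex: (last child of t, s) for {1}, (t, first child of s) for {k+1}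
  and (last child of t, first child of s) for {1, k+1}. Under this bijection sigma(t,s) is
  obtained from the smaller tree by grafting it between the forests F_i, sigma(i) = 1, on a new
  root. So the three partial sums obey the recursions defining the left, middle and right
  products, and induction on size t + size s shows that the sum over all of QSh(k,l) is t * s.
*)

lemma combos_singletons_append:
  "combos (map (\<lambda>a. {#a#}) as @ Ms) = image_mset ((@) as) (combos Ms)"
  by (induction as) (simp_all add: multiset.map_comp o_def)

lemma graft_singletons_around:
  "graft (map (\<lambda>a. {#a#}) as @ M # map (\<lambda>a. {#a#}) bs) = image_mset (\<lambda>x. Node (as @ x # bs)) M"
proof -
  have "combos (map (\<lambda>a. {#a#}) bs) = {#bs#}"
    using combos_singletons_append[of bs "[]"] by simp
  then show ?thesis
    by (simp add: graft_def combos_singletons_append multiset.map_comp o_def)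
qed

lemma prec_Node:
  "xs \<noteq> [] \<Longrightarrow> prod Prec (Node xs) y = image_mset (\<lambda>x. Node (butlast xs @ [x])) (prod Star (last xs) y)"
  using graft_singletons_around[of "butlast xs" _ "[]"] by (subst prod.simps(3)) (simp del: prod.simps)

lemma dot_Node:
  "xs \<noteq> [] \<Longrightarrow> ys \<noteq> [] \<Longrightarrow>
   prod Dot (Node xs) (Node ys) = image_mset (\<lambda>x. Node (butlast xs @ x # tl ys)) (prod Star (last xs) (hd ys))"
  by (subst prod.simps(6)) (simp add: graft_singletons_around del: prod.simps)

lemma succ_Node:
  "ys \<noteq> [] \<Longrightarrow> prod Succ x (Node ys) = image_mset (\<lambda>y. Node (y # tl ys)) (prod Star x (hd ys))"
  using graft_singletons_around[of "[]" _ "tl ys"] by (subst prod.simps(8)) (simp del: prod.simps)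

lemma star_Node_Leaf_eq_prec: "xs \<noteq> [] \<Longrightarrow> prod Star (Node xs) Leaf = prod Prec (Node xs) Leaf"
  by (simp add: prec_Node del: prod.simps(3)) (metis append_butlast_last_id)

lemma star_Leaf_Node_eq_succ: "ys \<noteq> [] \<Longrightarrow> prod Star Leaf (Node ys) = prod Succ Leaf (Node ys)"
  by (simp add: succ_Node del: prod.simps(8))

lemma wf_tree_NodeD: "wf_tree (Node cs) \<Longrightarrow> cs \<noteq> [] \<and> wf_tree (hd cs) \<and> wf_tree (last cs)"
  by (cases cs) (auto simp: list_all_iff)

lemma image_mset_sum: "image_mset f (\<Sum>x\<in>A. g x) = (\<Sum>x\<in>A. image_mset f (g x))"
  by (induction A rule: infinite_finite_induct) auto

lemma QSh_image:
  assumes "\<sigma> \<in> QSh k l"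
  shows "\<sigma> ` {1..k+l} = {1..card (\<sigma> ` {1..k+l})}"
proof -
  obtain n where "\<sigma> ` {1..k+l} = {1..n}"
    using assms by (auto simp: QSh_def)
  then show ?thesis by simp
qed

lemma QSh_ge_1: "\<sigma> \<in> QSh k l \<Longrightarrow> i \<in> {1..k+l} \<Longrightarrow> 1 \<le> \<sigma> i"
  by (drule QSh_image) (metis atLeastAtMost_iff image_eqI)

lemma finite_QSh: "finite (QSh k l)"
proof (rule finite_subset)
  show "QSh k l \<subseteq> PiE {1..k+l} (\<lambda>_. {1..k+l})"
  proof
    fix \<sigma> assume \<sigma>: "\<sigma> \<in> QSh k l"
    have "card (\<sigma> ` {1..k+l}) \<le> k + l"
      using card_image_le[of "{1..k+l}" \<sigma>] by simp
    then have "\<sigma> ` {1..k+l} \<subseteq> {1..k+l}"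
      by (subst QSh_image[OF \<sigma>]) auto
    with \<sigma> show "\<sigma> \<in> PiE {1..k+l} (\<lambda>_. {1..k+l})"
      by (auto simp: PiE_def QSh_def)
  qed
qed (simp add: finite_PiE)

lemma QSh_0_0: "QSh 0 0 = {\<lambda>_. undefined}"
  by (auto simp: QSh_def extensional_def strict_mono_on_def)

lemma QSh_ones_subset:
  assumes \<sigma>: "\<sigma> \<in> QSh k l"
  shows "{i\<in>{1..k+l}. \<sigma> i = 1} \<subseteq> {1, k+1}"
proof
  fix i assume i: "i \<in> {i\<in>{1..k+l}. \<sigma> i = 1}"
  have left: "strict_mono_on {1..k} \<sigma>" and right: "strict_mono_on {k+1..k+l} \<sigma>"
    using \<sigma> by (auto simp: QSh_def)
  show "i \<in> {1, k+1}"
  proof (rule ccontr)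
    assume "i \<notin> {1, k+1}"
    then consider "1 < i" "i \<le> k" | "k+1 < i" "i \<le> k+l"
      using i by force
    then show False
    proof cases
      case 1
      then have "\<sigma> 1 < \<sigma> i" using strict_mono_onD[OF left] by simp
      then show False using i QSh_ge_1[OF \<sigma>, of 1] 1 by simp
    next
      case 2
      then have "\<sigma> (k+1) < \<sigma> i" using strict_mono_onD[OF right] by simp
      then show False using i QSh_ge_1[OF \<sigma>, of "k+1"] 2 by simp
    qed
  qed
qed

lemma QSh_ones_nonempty:
  assumes "\<sigma> \<in> QSh k l" and "0 < k + l"
  shows "{i\<in>{1..k+l}. \<sigma> i = 1} \<noteq> {}"
proof -
  obtain n where "\<sigma> ` {1..k+l} = {1..n}"
    using assms(1) by (auto simp: QSh_def)
  moreover have "\<sigma> ` {1..k+l} \<noteq> {}"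
    using assms(2) by auto
  ultimately have "1 \<in> \<sigma> ` {1..k+l}"
    by auto
  then show ?thesis by auto
qed

definition QSh_fibre :: "nat \<Rightarrow> nat \<Rightarrow> nat set \<Rightarrow> (nat \<Rightarrow> nat) set" where
  "QSh_fibre k l D = {\<sigma> \<in> QSh k l. {i\<in>{1..k+l}. \<sigma> i = 1} = D}"

definition shuffle_sum :: "tree \<Rightarrow> tree \<Rightarrow> tree multiset" where
  "shuffle_sum t s = (\<Sum>\<sigma>\<in>QSh (length (rbranch t)) (length (lbranch s)). {#sigma_tree \<sigma> t s#})"

definition shuffle_sum_fibre :: "nat set \<Rightarrow> tree \<Rightarrow> tree \<Rightarrow> tree multiset" where
  "shuffle_sum_fibre D t s =
     (\<Sum>\<sigma>\<in>QSh_fibre (length (rbranch t)) (length (lbranch s)) D. {#sigma_tree \<sigma> t s#})"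

lemma shuffle_sum_Leaf_Leaf: "shuffle_sum Leaf Leaf = {#Leaf#}"
  by (simp add: shuffle_sum_def sigma_tree_def QSh_0_0)

lemma shuffle_sum_eq_single_fibre:
  assumes "0 < length (rbranch t) + length (lbranch s)"
    and "{1, length (rbranch t) + 1} \<inter> {1..length (rbranch t) + length (lbranch s)} = {d}"
  shows "shuffle_sum t s = shuffle_sum_fibre {d} t s"
proof -
  have "QSh_fibre (length (rbranch t)) (length (lbranch s)) {d} = QSh (length (rbranch t)) (length (lbranch s))"
    using QSh_ones_subset QSh_ones_nonempty assms unfolding QSh_fibre_def by fast
  then show ?thesis
    by (simp add: shuffle_sum_def shuffle_sum_fibre_def)
qed

lemma shuffle_sum_split:
  assumes "0 < length (rbranch t)"
  shows "shuffle_sum t s = shuffle_sum_fibre {1} t s + shuffle_sum_fibre {1, length (rbranch t) + 1} t s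
    + shuffle_sum_fibre {length (rbranch t) + 1} t s"
proof -
  define k l where "k = length (rbranch t)" and "l = length (lbranch s)"
  have "(\<lambda>\<sigma>. {i\<in>{1..k+l}. \<sigma> i = 1}) ` QSh k l \<subseteq> {{1}, {1, k+1}, {k+1}}"
    using QSh_ones_subset QSh_ones_nonempty assms unfolding k_def by fast
  then have "shuffle_sum t s = (\<Sum>D\<in>{{1}, {1, k+1}, {k+1}}. shuffle_sum_fibre D t s)"
    unfolding shuffle_sum_def shuffle_sum_fibre_def QSh_fibre_def k_def l_def
    by (simp add: sum.group finite_QSh)
  then show ?thesis
    using assms unfolding k_def by (simp add: add.assoc)
qed

text \<open>\<open>pos\<close> enumerates increasingly, block by block, the positions of \<open>{1..k+l}\<close> outside \<open>D\<close>,
  and \<open>unpos\<close> is its inverse; \<open>lower\<close> and \<open>lift\<close> are the mutually inverse bijections between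
  the quasi-shuffles with \<open>\<sigma>\<^sup>-\<^sup>1(1) = D\<close> and \<open>QSh k' l'\<close>.\<close>
locale QSh_reduction =
  fixes k l k' l' :: nat and D :: "nat set" and pos unpos :: "nat \<Rightarrow> nat"
  assumes D_subset: "D \<subseteq> {1, k+1} \<inter> {1..k+l}" and D_nonempty: "D \<noteq> {}"
    and pos: "\<And>i. i \<in> {1..k'+l'} \<Longrightarrow> pos i \<in> {1..k+l} - D \<and> unpos (pos i) = i"
    and unpos: "\<And>j. j \<in> {1..k+l} - D \<Longrightarrow> unpos j \<in> {1..k'+l'} \<and> pos (unpos j) = j"
    and pos_le_iff: "\<And>i. i \<in> {1..k'+l'} \<Longrightarrow> pos i \<le> k \<longleftrightarrow> i \<le> k'"
    and strict_mono_pos: "strict_mono_on {1..k'+l'} pos"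
    and filter_left: "filter (\<lambda>i. i \<notin> D) [1..<k+1] = map pos [1..<k'+1]"
    and filter_right: "filter (\<lambda>i. i \<notin> D) [k+1..<k+l+1] = map pos [k'+1..<k'+l'+1]"
begin

definition lift :: "(nat \<Rightarrow> nat) \<Rightarrow> nat \<Rightarrow> nat" where
  "lift \<tau> = restrict (\<lambda>i. if i \<in> D then 1 else Suc (\<tau> (unpos i))) {1..k+l}"

definition lower :: "(nat \<Rightarrow> nat) \<Rightarrow> nat \<Rightarrow> nat" where
  "lower \<sigma> = restrict (\<lambda>i. \<sigma> (pos i) - 1) {1..k'+l'}"

lemma lift_D [simp]: "i \<in> D \<Longrightarrow> lift \<tau> i = 1"
  using D_subset by (auto simp: lift_def)

lemma lift_pos [simp]: "i \<in> {1..k'+l'} \<Longrightarrow> lift \<tau> (pos i) = Suc (\<tau> i)"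
  using pos[of i] by (simp add: lift_def)

lemma lift_notin_D: "j \<in> {1..k+l} - D \<Longrightarrow> lift \<tau> j = Suc (\<tau> (unpos j))"
  by (simp add: lift_def)

lemma image_pos: "pos ` {1..k'+l'} = {1..k+l} - D"
proof
  show "pos ` {1..k'+l'} \<subseteq> {1..k+l} - D"
    using pos by auto
  show "{1..k+l} - D \<subseteq> pos ` {1..k'+l'}"
    using unpos by (metis image_eqI subsetI)
qed

lemma unpos_le_iff: "j \<in> {1..k+l} - D \<Longrightarrow> unpos j \<le> k' \<longleftrightarrow> j \<le> k"
  using unpos[of j] pos_le_iff[of "unpos j"] by simp

lemma strict_mono_unpos: "strict_mono_on ({1..k+l} - D) unpos"
  by (rule strict_mono_onI) (metis strict_mono_on_less[OF strict_mono_pos] unpos)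

lemma lift_image:
  assumes "\<tau> ` {1..k'+l'} = {1..n}"
  shows "lift \<tau> ` {1..k+l} = {1..Suc n}"
proof -
  have "{1..k+l} = D \<union> pos ` {1..k'+l'}"
    using image_pos D_subset by auto
  then have "lift \<tau> ` {1..k+l} = lift \<tau> ` D \<union> Suc ` \<tau> ` {1..k'+l'}"
    by (auto simp: image_Un image_image)
  also have "\<dots> = insert 1 (Suc ` {1..n})"
    using D_nonempty assms by auto
  also have "\<dots> = {1..Suc n}"
    by (auto simp: image_iff)
  finally show ?thesis .
qed

lemma lift_strict_mono_on:
  assumes \<tau>: "\<tau> \<in> QSh k' l'" and B: "B \<subseteq> {1..k+l}" and mono: "strict_mono_on (unpos ` (B - D)) \<tau>"
    and D_least: "\<And>i j. i \<in> B \<Longrightarrow> j \<in> B \<Longrightarrow> i < j \<Longrightarrow> j \<notin> D"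
  shows "strict_mono_on B (lift \<tau>)"
proof (rule strict_mono_onI)
  fix i j assume ij: "i \<in> B" "j \<in> B" "i < j"
  then have j: "j \<in> {1..k+l} - D"
    using B D_least by blast
  show "lift \<tau> i < lift \<tau> j"
  proof (cases "i \<in> D")
    case True
    then show ?thesis
      using unpos[OF j] QSh_ge_1[OF \<tau>, of "unpos j"] by (simp add: lift_notin_D[OF j])
  next
    case False
    then have i: "i \<in> {1..k+l} - D"
      using ij(1) B by blast
    have "unpos i < unpos j"
      using strict_mono_onD[OF strict_mono_unpos i j ij(3)] .
    moreover have "unpos i \<in> unpos ` (B - D)" "unpos j \<in> unpos ` (B - D)"
      using ij i j by auto
    ultimately have "\<tau> (unpos i) < \<tau> (unpos j)"
      using strict_mono_onD[OF mono] by blast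
    then show ?thesis
      by (simp add: lift_notin_D[OF i] lift_notin_D[OF j])
  qed
qed

lemma lift_QSh_fibre:
  assumes \<tau>: "\<tau> \<in> QSh k' l'"
  shows "lift \<tau> \<in> QSh_fibre k l D"
proof -
  have "unpos ` ({1..k} - D) \<subseteq> {1..k'}" "unpos ` ({k+1..k+l} - D) \<subseteq> {k'+1..k'+l'}"
    using unpos unpos_le_iff by fastforce+
  moreover have "strict_mono_on {1..k'} \<tau>" "strict_mono_on {k'+1..k'+l'} \<tau>"
    using \<tau> by (auto simp: QSh_def)
  ultimately have "strict_mono_on (unpos ` ({1..k} - D)) \<tau>" "strict_mono_on (unpos ` ({k+1..k+l} - D)) \<tau>"
    by (metis monotone_on_subset)+
  moreover have "j \<notin> D" if "i \<in> {1..k}" "j \<in> {1..k}" "i < j" for i j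
    using that D_subset by auto
  moreover have "j \<notin> D" if "i \<in> {k+1..k+l}" "j \<in> {k+1..k+l}" "i < j" for i j
    using that D_subset by auto
  ultimately have "strict_mono_on {1..k} (lift \<tau>)" "strict_mono_on {k+1..k+l} (lift \<tau>)"
    by (auto intro: lift_strict_mono_on[OF \<tau>])
  moreover have "lift \<tau> ` {1..k+l} = {1..Suc (card (\<tau> ` {1..k'+l'}))}"
    using lift_image QSh_image[OF \<tau>] by blast
  moreover have "lift \<tau> j \<noteq> 1" if "j \<in> {1..k+l} - D" for j
    using unpos[OF that] QSh_ge_1[OF \<tau>, of "unpos j"] by (simp add: lift_notin_D[OF that])
  then have "{i\<in>{1..k+l}. lift \<tau> i = 1} = D"
    using D_subset by force
  ultimately show ?thesis
    unfolding QSh_fibre_def QSh_def lift_def by auto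
qed

lemma lower_strict_mono_on:
  assumes \<sigma>: "\<sigma> \<in> QSh k l" and B: "B \<subseteq> {1..k'+l'}" and mono: "strict_mono_on (pos ` B) \<sigma>"
  shows "strict_mono_on B (lower \<sigma>)"
proof (rule strict_mono_onI)
  fix i j assume ij: "i \<in> B" "j \<in> B" "i < j"
  then have "\<sigma> (pos i) < \<sigma> (pos j)"
    using strict_mono_onD[OF mono] strict_mono_onD[OF strict_mono_pos] B by blast
  moreover have "1 \<le> \<sigma> (pos i)"
    using QSh_ge_1[OF \<sigma>] pos ij(1) B by blast
  ultimately show "lower \<sigma> i < lower \<sigma> j"
    using ij B by (auto simp: lower_def)
qed

lemma lower_QSh:
  assumes \<sigma>: "\<sigma> \<in> QSh_fibre k l D"
  shows "lower \<sigma> \<in> QSh k' l'"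
proof -
  have QSh: "\<sigma> \<in> QSh k l" and ones: "{i\<in>{1..k+l}. \<sigma> i = 1} = D"
    using \<sigma> by (auto simp: QSh_fibre_def)
  define n where "n = card (\<sigma> ` {1..k+l})"
  have "lower \<sigma> ` {1..k'+l'} = (\<lambda>x. x - 1) ` \<sigma> ` ({1..k+l} - D)"
    unfolding image_pos[symmetric] lower_def by (simp add: image_image)
  also have "\<sigma> ` ({1..k+l} - D) = {1..n} - {1}"
    using ones QSh_image[OF QSh] unfolding n_def by auto
  also have "(\<lambda>x. x - 1) ` ({1..n} - {1}) = {1..n - 1}"
    by (force simp: image_iff)
  finally have image: "lower \<sigma> ` {1..k'+l'} = {1..n - 1}" .
  have "pos ` {1..k'} \<subseteq> {1..k}" "pos ` {k'+1..k'+l'} \<subseteq> {k+1..k+l}"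
    using pos pos_le_iff by fastforce+
  moreover have "strict_mono_on {1..k} \<sigma>" "strict_mono_on {k+1..k+l} \<sigma>"
    using QSh by (auto simp: QSh_def)
  ultimately have "strict_mono_on {1..k'} (lower \<sigma>)" "strict_mono_on {k'+1..k'+l'} (lower \<sigma>)"
    by (auto intro!: lower_strict_mono_on[OF QSh] elim: monotone_on_subset)
  with image show ?thesis
    unfolding QSh_def lower_def by auto
qed

lemma lower_lift: "\<tau> \<in> QSh k' l' \<Longrightarrow> lower (lift \<tau>) = \<tau>"
  by (auto simp: lower_def QSh_def extensional_def)

lemma lift_lower:
  assumes "\<sigma> \<in> QSh_fibre k l D"
  shows "lift (lower \<sigma>) = \<sigma>"
proof
  fix j
  have QSh: "\<sigma> \<in> QSh k l" and ones: "{i\<in>{1..k+l}. \<sigma> i = 1} = D"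
    using assms by (auto simp: QSh_fibre_def)
  consider "j \<in> D" | "j \<in> {1..k+l} - D" | "j \<notin> {1..k+l}"
    using D_subset by blast
  then show "lift (lower \<sigma>) j = \<sigma> j"
  proof cases
    case 2
    then show ?thesis
      using unpos[OF 2] QSh_ge_1[OF QSh, of j] by (simp add: lift_notin_D lower_def)
  qed (use ones QSh in \<open>auto simp: lift_def QSh_def extensional_def\<close>)
qed

lemma sum_QSh_fibre: "(\<Sum>\<sigma>\<in>QSh_fibre k l D. f \<sigma>) = (\<Sum>\<tau>\<in>QSh k' l'. f (lift \<tau>))"
  by (rule sum.reindex_bij_witness[of _ lower lift, symmetric])
    (auto simp: lower_lift lift_lower lift_QSh_fibre lower_QSh)

lemma filter_lift_Suc:
  assumes xs: "filter (\<lambda>i. i \<notin> D) xs = map pos ys" and ys: "set ys \<subseteq> {1..k'+l'}" and "0 < q"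
  shows "filter (\<lambda>i. lift \<tau> i = Suc q) xs = map pos (filter (\<lambda>i. \<tau> i = q) ys)"
proof -
  have "filter (\<lambda>i. lift \<tau> i = Suc q) xs = filter (\<lambda>i. lift \<tau> i = Suc q) (filter (\<lambda>i. i \<notin> D) xs)"
    using \<open>0 < q\<close> by (auto simp: filter_filter intro!: filter_cong)
  also have "\<dots> = map pos (filter (\<lambda>i. \<tau> i = q) ys)"
    unfolding xs filter_map o_def using ys by (intro arg_cong[where f = "map pos"] filter_cong) auto
  finally show ?thesis .
qed

lemma filter_lift_1:
  assumes "\<tau> \<in> QSh k' l'" and "set xs \<subseteq> {1..k+l}"
  shows "filter (\<lambda>i. lift \<tau> i = 1) xs = filter (\<lambda>i. i \<in> D) xs"
proof (rule filter_cong[OF refl])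
  have "{i\<in>{1..k+l}. lift \<tau> i = 1} = D"
    using lift_QSh_fibre[OF assms(1)] by (simp add: QSh_fibre_def)
  then show "lift \<tau> i = 1 \<longleftrightarrow> i \<in> D" if "i \<in> set xs" for i
    using that assms(2) by blast
qed

lemma ladder_lift:
  assumes F: "\<And>i. i \<in> {1..k'+l'} \<Longrightarrow> F ! (pos i - 1) = F' ! (i - 1)" and "0 < p"
  shows "ladder F (lift \<tau>) k l m (Suc p) = ladder F' \<tau> k' l' m p"
  using \<open>0 < p\<close>
proof (induction m arbitrary: p)
  case (Suc m)
  have level: "concat (map (\<lambda>i. F ! (i - 1)) (filter (\<lambda>i. lift \<tau> i = Suc p) xs))
      = concat (map (\<lambda>i. F' ! (i - 1)) (filter (\<lambda>i. \<tau> i = p) ys))"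
    if "filter (\<lambda>i. i \<notin> D) xs = map pos ys" and "set ys \<subseteq> {1..k'+l'}" for xs ys
  proof -
    have "set (filter (\<lambda>i. \<tau> i = p) ys) \<subseteq> {1..k'+l'}"
      using that(2) by auto
    then have "map (\<lambda>i. F ! (pos i - 1)) (filter (\<lambda>i. \<tau> i = p) ys)
        = map (\<lambda>i. F' ! (i - 1)) (filter (\<lambda>i. \<tau> i = p) ys)"
      using F by auto
    then show ?thesis
      unfolding filter_lift_Suc[OF that Suc.prems] map_map o_def by (rule arg_cong[where f = concat])
  qed
  have "set [1..<k'+1] \<subseteq> {1..k'+l'}" "set [k'+1..<k'+l'+1] \<subseteq> {1..k'+l'}"
    by auto
  then show ?case
    using level[OF filter_left] level[OF filter_right] Suc by simp
qed simp

lemma ladder_lift_root: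
  assumes \<tau>: "\<tau> \<in> QSh k' l'" and F: "\<And>i. i \<in> {1..k'+l'} \<Longrightarrow> F ! (pos i - 1) = F' ! (i - 1)"
  shows "ladder F (lift \<tau>) k l (card (lift \<tau> ` {1..k+l})) 1
    = Node (concat (map (\<lambda>i. F ! (i - 1)) (filter (\<lambda>i. i \<in> D) [1..<k+1]))
        @ ladder F' \<tau> k' l' (card (\<tau> ` {1..k'+l'})) 1
        # concat (map (\<lambda>i. F ! (i - 1)) (filter (\<lambda>i. i \<in> D) [k+1..<k+l+1])))"
proof -
  have "card (lift \<tau> ` {1..k+l}) = Suc (card (\<tau> ` {1..k'+l'}))"
    using lift_image[OF QSh_image[OF \<tau>]] by simp
  moreover have "filter (\<lambda>i. lift \<tau> i = 1) [1..<k+1] = filter (\<lambda>i. i \<in> D) [1..<k+1]"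
    by (rule filter_lift_1[OF \<tau>]) auto
  moreover have "filter (\<lambda>i. lift \<tau> i = 1) [k+1..<k+l+1] = filter (\<lambda>i. i \<in> D) [k+1..<k+l+1]"
    by (rule filter_lift_1[OF \<tau>]) auto
  moreover have "ladder F (lift \<tau>) k l m (Suc 1) = ladder F' \<tau> k' l' m 1" for m
    by (rule ladder_lift[OF F]) simp_all
  ultimately show ?thesis
    by (simp only: ladder.simps(2) append_Cons append_Nil)
qed

lemma shuffle_sum_fibre_reduction:
  assumes k: "length (rbranch t) = k" and l: "length (lbranch s) = l"
    and k': "length (rbranch t') = k'" and l': "length (lbranch s') = l'"
    and F: "\<And>i. i \<in> {1..k'+l'} \<Longrightarrow>
      (rbranch t @ lbranch s) ! (pos i - 1) = (rbranch t' @ lbranch s') ! (i - 1)"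
  shows "shuffle_sum_fibre D t s = image_mset (\<lambda>x.
    Node (concat (map (\<lambda>i. (rbranch t @ lbranch s) ! (i - 1)) (filter (\<lambda>i. i \<in> D) [1..<k+1]))
      @ x # concat (map (\<lambda>i. (rbranch t @ lbranch s) ! (i - 1)) (filter (\<lambda>i. i \<in> D) [k+1..<k+l+1]))))
    (shuffle_sum t' s')" (is "_ = image_mset ?root _")
proof -
  have "shuffle_sum_fibre D t s = (\<Sum>\<tau>\<in>QSh k' l'. {#sigma_tree (lift \<tau>) t s#})"
    unfolding shuffle_sum_fibre_def k l by (rule sum_QSh_fibre)
  also have "\<dots> = (\<Sum>\<tau>\<in>QSh k' l'. {#?root (sigma_tree \<tau> t' s')#})"
  proof (rule sum.cong[OF refl])
    fix \<tau> assume "\<tau> \<in> QSh k' l'"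
    then have "sigma_tree (lift \<tau>) t s = ?root (sigma_tree \<tau> t' s')"
      unfolding sigma_tree_def Let_def k l k' l' by (rule ladder_lift_root) (use F in simp)
    then show "{#sigma_tree (lift \<tau>) t s#} = {#?root (sigma_tree \<tau> t' s')#}"
      by simp
  qed
  also have "\<dots> = image_mset ?root (shuffle_sum t' s')"
    by (simp add: shuffle_sum_def image_mset_sum k' l')
  finally show ?thesis .
qed

end

interpretation fibre_prec: QSh_reduction "Suc k" l k l "{1}" Suc "\<lambda>j. j - 1" for k l
proof
  show "filter (\<lambda>i. i \<notin> {1}) [1..<Suc k + 1] = map Suc [1..<k + 1]"
    by (simp add: upt_conv_Cons map_Suc_upt del: upt_Suc)
  show "filter (\<lambda>i. i \<notin> {1}) [Suc k + 1..<Suc k + l + 1] = map Suc [k + 1..<k + l + 1]"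
    by (simp add: map_Suc_upt del: upt_Suc)
qed (auto simp: strict_mono_on_def)

interpretation fibre_succ: QSh_reduction k "Suc l" k l "{k+1}" "\<lambda>i. if i \<le> k then i else Suc i"
  "\<lambda>j. if j \<le> k then j else j - 1" for k l
proof
  have "map (\<lambda>i. if i \<le> k then i else Suc i) [1..<k+1] = [1..<k+1]"
    by (rule map_idI) (auto simp del: upt_Suc)
  then show "filter (\<lambda>i. i \<notin> {k+1}) [1..<k + 1] = map (\<lambda>i. if i \<le> k then i else Suc i) [1..<k + 1]"
    by (simp add: filter_id_conv del: upt_Suc)
  have "map (\<lambda>i. if i \<le> k then i else Suc i) [k + 1..<k + l + 1] = map Suc [k + 1..<k + l + 1]"
    by (rule map_cong) (auto simp del: upt_Suc)
  then show "filter (\<lambda>i. i \<notin> {k+1}) [k + 1..<k + Suc l + 1]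
      = map (\<lambda>i. if i \<le> k then i else Suc i) [k + 1..<k + l + 1]"
    by (simp add: upt_conv_Cons map_Suc_upt del: upt_Suc)
qed (auto simp: strict_mono_on_def)

interpretation fibre_dot: QSh_reduction "Suc k" "Suc l" k l "{1, Suc k + 1}"
  "\<lambda>i. if i \<le> k then Suc i else Suc (Suc i)" "\<lambda>j. if j \<le> Suc k then j - 1 else j - 2" for k l
proof
  have "map (\<lambda>i. if i \<le> k then Suc i else Suc (Suc i)) [1..<k + 1] = map Suc [1..<k + 1]"
    by (rule map_cong) (auto simp del: upt_Suc)
  then show "filter (\<lambda>i. i \<notin> {1, Suc k + 1}) [1..<Suc k + 1]
      = map (\<lambda>i. if i \<le> k then Suc i else Suc (Suc i)) [1..<k + 1]"
    by (simp add: upt_conv_Cons map_Suc_upt filter_id_conv del: upt_Suc)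
  have "map (\<lambda>i. if i \<le> k then Suc i else Suc (Suc i)) [k + 1..<k + l + 1]
      = map (Suc \<circ> Suc) [k + 1..<k + l + 1]"
    by (rule map_cong) (auto simp del: upt_Suc)
  then show "filter (\<lambda>i. i \<notin> {1, Suc k + 1}) [Suc k + 1..<Suc k + Suc l + 1]
      = map (\<lambda>i. if i \<le> k then Suc i else Suc (Suc i)) [k + 1..<k + l + 1]"
    by (simp add: upt_conv_Cons map_Suc_upt filter_id_conv del: upt_Suc flip: map_map)
qed (auto simp: strict_mono_on_def)

lemma prec_eq_shuffle_sum_fibre:
  assumes xs: "xs \<noteq> []" and star: "prod Star (last xs) s = shuffle_sum (last xs) s"
  shows "prod Prec (Node xs) s = shuffle_sum_fibre {1} (Node xs) s"
proof -
  define k l where "k = length (rbranch (last xs))" and "l = length (lbranch s)"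
  define F where "F = rbranch (Node xs) @ lbranch s"
  have F: "F = butlast xs # rbranch (last xs) @ lbranch s"
    using xs by (simp add: F_def)
  have "shuffle_sum_fibre {1} (Node xs) s = image_mset (\<lambda>x.
      Node (concat (map (\<lambda>i. F ! (i - 1)) (filter (\<lambda>i. i \<in> {1}) [1..<Suc k + 1]))
        @ x # concat (map (\<lambda>i. F ! (i - 1)) (filter (\<lambda>i. i \<in> {1}) [Suc k + 1..<Suc k + l + 1]))))
      (shuffle_sum (last xs) s)"
    unfolding F_def by (rule fibre_prec.shuffle_sum_fibre_reduction) (use xs in \<open>simp_all add: k_def l_def\<close>)
  also have "filter (\<lambda>i. i \<in> {1}) [1..<Suc k + 1] = [1]"
    by (simp add: upt_conv_Cons del: upt_Suc)
  also have "filter (\<lambda>i. i \<in> {1}) [Suc k + 1..<Suc k + l + 1] = []"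
    by (simp add: filter_empty_conv del: upt_Suc)
  finally have "shuffle_sum_fibre {1} (Node xs) s
      = image_mset (\<lambda>x. Node (butlast xs @ [x])) (shuffle_sum (last xs) s)"
    by (simp add: F)
  then show ?thesis
    using prec_Node[OF xs] star by simp
qed

lemma succ_eq_shuffle_sum_fibre:
  assumes ys: "ys \<noteq> []" and star: "prod Star t (hd ys) = shuffle_sum t (hd ys)"
  shows "prod Succ t (Node ys) = shuffle_sum_fibre {length (rbranch t) + 1} t (Node ys)"
proof -
  define k l where "k = length (rbranch t)" and "l = length (lbranch (hd ys))"
  define F where "F = rbranch t @ lbranch (Node ys)"
  have F: "F = rbranch t @ tl ys # lbranch (hd ys)"
    using ys by (simp add: F_def)
  have "F ! ((if i \<le> k then i else Suc i) - 1) = (rbranch t @ lbranch (hd ys)) ! (i - 1)"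
    if "i \<in> {1..k+l}" for i
    using that by (cases "i \<le> k") (auto simp: F k_def nth_append Suc_diff_le)
  then have "shuffle_sum_fibre {k+1} t (Node ys) = image_mset (\<lambda>x.
      Node (concat (map (\<lambda>i. F ! (i - 1)) (filter (\<lambda>i. i \<in> {k+1}) [1..<k + 1]))
        @ x # concat (map (\<lambda>i. F ! (i - 1)) (filter (\<lambda>i. i \<in> {k+1}) [k + 1..<k + Suc l + 1]))))
      (shuffle_sum t (hd ys))"
    unfolding F_def
    by (intro fibre_succ.shuffle_sum_fibre_reduction) (use ys in \<open>simp_all add: k_def l_def F_def\<close>)
  also have "filter (\<lambda>i. i \<in> {k+1}) [1..<k + 1] = []"
    by (simp add: filter_empty_conv del: upt_Suc)
  also have "filter (\<lambda>i. i \<in> {k+1}) [k+1..<k + Suc l + 1] = [k+1]"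
    by (simp add: upt_conv_Cons del: upt_Suc)
  finally have "shuffle_sum_fibre {k+1} t (Node ys)
      = image_mset (\<lambda>x. Node (x # tl ys)) (shuffle_sum t (hd ys))"
    by (simp add: F k_def nth_append)
  then show ?thesis
    using succ_Node[OF ys] star by (simp add: k_def)
qed

lemma dot_eq_shuffle_sum_fibre:
  assumes xs: "xs \<noteq> []" and ys: "ys \<noteq> []"
    and star: "prod Star (last xs) (hd ys) = shuffle_sum (last xs) (hd ys)"
  shows "prod Dot (Node xs) (Node ys) = shuffle_sum_fibre {1, length (rbranch (Node xs)) + 1} (Node xs) (Node ys)"
proof -
  define k l where "k = length (rbranch (last xs))" and "l = length (lbranch (hd ys))"
  define F where "F = rbranch (Node xs) @ lbranch (Node ys)"
  have F: "F = butlast xs # rbranch (last xs) @ tl ys # lbranch (hd ys)"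
    using xs ys by (simp add: F_def)
  have "F ! ((if i \<le> k then Suc i else Suc (Suc i)) - 1) = (rbranch (last xs) @ lbranch (hd ys)) ! (i - 1)"
    if "i \<in> {1..k+l}" for i
    using that by (cases "i \<le> k") (auto simp: F k_def nth_append nth_Cons' Suc_diff_le)
  then have "shuffle_sum_fibre {1, Suc k + 1} (Node xs) (Node ys) = image_mset (\<lambda>x.
      Node (concat (map (\<lambda>i. F ! (i - 1)) (filter (\<lambda>i. i \<in> {1, Suc k + 1}) [1..<Suc k + 1]))
        @ x # concat (map (\<lambda>i. F ! (i - 1)) (filter (\<lambda>i. i \<in> {1, Suc k + 1}) [Suc k + 1..<Suc k + Suc l + 1]))))
      (shuffle_sum (last xs) (hd ys))"
    unfolding F_def
    by (intro fibre_dot.shuffle_sum_fibre_reduction) (use xs ys in \<open>simp_all add: k_def l_def F_def\<close>)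
  also have "filter (\<lambda>i. i \<in> {1, Suc k + 1}) [1..<Suc k + 1] = [1]"
    by (simp add: upt_conv_Cons del: upt_Suc)
  also have "filter (\<lambda>i. i \<in> {1, Suc k + 1}) [Suc k + 1..<Suc k + Suc l + 1] = [Suc k + 1]"
    by (simp add: upt_conv_Cons del: upt_Suc)
  finally have "shuffle_sum_fibre {1, Suc k + 1} (Node xs) (Node ys)
      = image_mset (\<lambda>x. Node (butlast xs @ x # tl ys)) (shuffle_sum (last xs) (hd ys))"
    by (simp add: F k_def nth_append)
  then show ?thesis
    using dot_Node[OF xs ys] star xs by (simp add: k_def)
qed

lemma star_eq_shuffle_sum: "wf_tree t \<Longrightarrow> wf_tree s \<Longrightarrow> prod Star t s = shuffle_sum t s"
proof (induction "size t + size s" arbitrary: t s rule: less_induct)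
  case less
  consider "t = Leaf" "s = Leaf" | ys where "t = Leaf" "s = Node ys"
    | xs where "t = Node xs" "s = Leaf" | xs ys where "t = Node xs" "s = Node ys"
    by (cases t; cases s) auto
  then show ?case
  proof cases
    case 1
    then show ?thesis by (simp add: shuffle_sum_Leaf_Leaf)
  next
    case (2 ys)
    then have ys: "ys \<noteq> []" "wf_tree (hd ys)"
      using less.prems wf_tree_NodeD by auto
    have "prod Star t s = prod Succ t s"
      using star_Leaf_Node_eq_succ[OF ys(1)] 2 by simp
    also have "\<dots> = shuffle_sum_fibre {1} t s"
      using succ_eq_shuffle_sum_fibre[OF ys(1)] less.hyps[of t "hd ys"] size_hd_less[OF ys(1)] ys 2 by simp
    also have "\<dots> = shuffle_sum t s"
      using ys 2 by (intro shuffle_sum_eq_single_fibre[symmetric]) auto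
    finally show ?thesis .
  next
    case (3 xs)
    then have xs: "xs \<noteq> []" "wf_tree (last xs)"
      using less.prems wf_tree_NodeD by auto
    have "prod Star t s = prod Prec t s"
      using star_Node_Leaf_eq_prec[OF xs(1)] 3 by simp
    also have "\<dots> = shuffle_sum_fibre {1} t s"
      using prec_eq_shuffle_sum_fibre[OF xs(1)] less.hyps[of "last xs" s] size_last_less[OF xs(1)] xs 3 by simp
    also have "\<dots> = shuffle_sum t s"
      using xs 3 by (intro shuffle_sum_eq_single_fibre[symmetric]) auto
    finally show ?thesis .
  next
    case (4 xs ys)
    then have xs: "xs \<noteq> []" "wf_tree (last xs)" and ys: "ys \<noteq> []" "wf_tree (hd ys)"
      using less.prems wf_tree_NodeD by auto
    have "prod Star t s = prod Prec t s + prod Dot t s + prod Succ t s"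
      using 4 by simp
    also have "\<dots> = shuffle_sum_fibre {1} t s + shuffle_sum_fibre {1, length (rbranch t) + 1} t s
        + shuffle_sum_fibre {length (rbranch t) + 1} t s"
      using prec_eq_shuffle_sum_fibre[OF xs(1)] dot_eq_shuffle_sum_fibre[OF xs(1) ys(1)]
        succ_eq_shuffle_sum_fibre[OF ys(1)] less.hyps less.prems xs ys 4
        size_last_less[OF xs(1)] size_hd_less[OF ys(1)]
      by (simp del: prod.simps)
    also have "\<dots> = shuffle_sum t s"
      using xs 4 by (intro shuffle_sum_split[symmetric]) simp
    finally show ?thesis .
  qed
qed

theorem mainTheorem9:
  fixes t s :: tree
  assumes "wf_tree t" and "wf_tree s" and "t \<noteq> Leaf" and "s \<noteq> Leaf"
  defines "k \<equiv> length (rbranch t)" and "l \<equiv> length (lbranch s)"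
  shows "prec t s = (\<Sum>\<sigma>\<in>{\<sigma>\<in>QSh k l. {i\<in>{1..k+l}. \<sigma> i = 1} = {1}}. {#sigma_tree \<sigma> t s#})
     \<and> dotp t s = (\<Sum>\<sigma>\<in>{\<sigma>\<in>QSh k l. {i\<in>{1..k+l}. \<sigma> i = 1} = {1, k+1}}. {#sigma_tree \<sigma> t s#})
     \<and> succ t s = (\<Sum>\<sigma>\<in>{\<sigma>\<in>QSh k l. {i\<in>{1..k+l}. \<sigma> i = 1} = {k+1}}. {#sigma_tree \<sigma> t s#})"
proof -
  obtain xs ys where t: "t = Node xs" and s: "s = Node ys"
    using assms(3,4) by (cases t; cases s) auto
  have xs: "xs \<noteq> []" "wf_tree (last xs)" and ys: "ys \<noteq> []" "wf_tree (hd ys)"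
    using assms(1,2) t s wf_tree_NodeD by auto
  have "prec t s = shuffle_sum_fibre {1} t s"
    unfolding prec_def t using prec_eq_shuffle_sum_fibre xs assms(2) star_eq_shuffle_sum by simp
  moreover have "dotp t s = shuffle_sum_fibre {1, k+1} t s"
    unfolding dotp_def k_def t s using dot_eq_shuffle_sum_fibre xs ys star_eq_shuffle_sum by simp
  moreover have "succ t s = shuffle_sum_fibre {k+1} t s"
    unfolding succ_def k_def s using succ_eq_shuffle_sum_fibre ys assms(1) star_eq_shuffle_sum by simp
  ultimately show ?thesis
    by (simp add: shuffle_sum_fibre_def QSh_fibre_def k_def l_def)
qed

end
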